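(* Let $k\ge1$ be an integer and let $a\in\mathbb{C}$ with $a\notin\{-1,-2,-3,\dots\}$. Then $${}_2F_1\!\left(\left.\begin{array}{c}a,\ a+k\\ a+1\end{array}\right|\frac12\right)=2^{a}\left[2^{k-1}-\frac{k-1}{a+1}\,{}_2F_1\!\left(\left.\begin{array}{c}2-k,\ a+1\\ a+2\end{array}\right|-1\right)\right],$$ equivalently $${}_2F_1\!\left(a,a+k;a+1;\tfrac12\right)=2^{a}\left(2^{k-1}-\sum_{i=1}^{k-1}\frac{(k-1)!}{(i-1)!\,(k-i-1)!\,(a+i)}\right).$$ (For $k\ge2$ the ${}_2F_1$ on the right is a finite sum with $k-1$ terms; for $k=1$ the bracket equals $1$.)
   Context: ${}_2F_1(a,b;c;z)=\sum_{m\ge0}\frac{(a)_m(b)_m}{m!\,(c)_m}z^m$ with $(\alpha)_m=\Gamma(\alpha+m)/\Gamma(\alpha)$; when an upper parameter is a nonpositive integer $-N$ the series terminates after the term $m=N$. *)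

theory Defs
  imports "HOL-Analysis.Analysis"
begin

text \<open>When an upper parameter is a
  nonpositive integer the terms vanish beyond the terminating index, so the
  infinite sum is the finite sum.\<close>
definition hyp2F1 :: "complex \<Rightarrow> complex \<Rightarrow> complex \<Rightarrow> complex \<Rightarrow> complex" where
  "hyp2F1 a b c z =
     (\<Sum>m. pochhammer a m * pochhammer b m / (fact m * pochhammer c m) * z ^ m)"

end

(*
  Pfaff's transformation F(a, b; c; z) = (1 - z)^(-a) F(a, c - b; c; z / (z - 1)) with
  b = a + k, c = a + 1 turns the left-hand side at z = 1/2 into 2^a F(1 - k, a; a + 1; -1),
  a terminating series equal to the sum over m < k of binom(k - 1, m) a / (a + m).  For this
  family the transformation follows by induction on k: the base case k = 1 is the binomial
  series F(a, b; b; z) = (1 - z)^(-a), and the step is the contiguous relation in b coming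
  from (b + 1)_(m + 1) = (b)_(m + 1) + (m + 1) (b + 1)_m, which on the terminating side is
  Pascal's rule.  Both closed forms then follow from a / (a + m) = 1 - m / (a + m) and
  m binom(j, m) = j binom(j - 1, m - 1).
*)
theory Submission
  imports Defs
begin

definition hyp2F1_term ::
  "complex \<Rightarrow> complex \<Rightarrow> complex \<Rightarrow> complex \<Rightarrow> nat \<Rightarrow> complex" where
  "hyp2F1_term a b c z m = pochhammer a m * pochhammer b m / (fact m * pochhammer c m) * z ^ m"

lemma hyp2F1_eq_suminf: "hyp2F1 a b c z = suminf (hyp2F1_term a b c z)"
  unfolding hyp2F1_def hyp2F1_term_def ..

lemma hyp2F1_term_0 [simp]: "hyp2F1_term a b c z 0 = 1"
  by (simp add: hyp2F1_term_def)

text \<open>Not \<open>b / (b + m)\<close>, which is wrong for \<open>b = 0, m = 0\<close>.\<close>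
lemma pochhammer_div_pochhammer_plus_one:
  fixes b :: "'a :: field_char_0"
  assumes "b + 1 \<notin> \<int>\<^sub>\<le>\<^sub>0"
  shows "pochhammer b m / pochhammer (b + 1) m = 1 - of_nat m / (b + of_nat m)"
proof (cases m)
  case 0
  then show ?thesis by simp
next
  case (Suc n)
  have "b + of_nat m = (b + 1) + of_nat n"
    using Suc by (simp add: algebra_simps)
  then have "b + of_nat m \<noteq> 0"
    using assms plus_of_nat_eq_0_imp by metis
  moreover have "pochhammer (b + 1) m \<noteq> 0"
    using assms pochhammer_eq_0_imp_nonpos_Int by blast
  moreover have "pochhammer b m * (b + of_nat m) = b * pochhammer (b + 1) m"
    unfolding Suc pochhammer_rec[of b n] pochhammer_rec'[of "b + 1" n]
    by (simp add: algebra_simps)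
  ultimately show ?thesis
    by (simp add: field_simps)
qed

lemma hyp2F1_term_minus_of_nat:
  "hyp2F1_term (- of_nat n) b c z m =
     of_nat (n choose m) * (pochhammer b m / pochhammer c m) * (- z) ^ m"
proof -
  have "pochhammer (- of_nat n) m / fact m = (- 1) ^ m * (of_nat (n choose m) :: complex)"
    by (simp add: binomial_gbinomial gbinomial_pochhammer flip: power_add)
  then show ?thesis
    unfolding hyp2F1_term_def power_minus[of z]
    by (simp add: divide_inverse mult_ac)
qed

lemma hyp2F1_minus_of_nat:
  "hyp2F1 (- of_nat n) b c z =
     (\<Sum>m\<le>n. of_nat (n choose m) * (pochhammer b m / pochhammer c m) * (- z) ^ m)"
proof -
  have "hyp2F1_term (- of_nat n) b c z sums (\<Sum>m\<le>n. hyp2F1_term (- of_nat n) b c z m)"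
    by (rule sums_finite) (auto simp: hyp2F1_term_def pochhammer_of_nat_eq_0_lemma)
  then show ?thesis
    by (simp add: hyp2F1_eq_suminf sums_iff hyp2F1_term_minus_of_nat)
qed

lemma hyp2F1_term_sums_binomial:
  assumes "b \<notin> \<int>\<^sub>\<le>\<^sub>0" and "norm z < 1"
  shows "hyp2F1_term a b b z sums (1 - z) powr (- a)"
proof -
  have "(\<lambda>m. ((- a) gchoose m) * (- z) ^ m) sums (1 + - z) powr (- a)"
    using assms(2) by (intro gen_binomial_complex) simp
  moreover have "((- a) gchoose m) * (- z) ^ m = hyp2F1_term a b b z m" for m
  proof -
    have "((- a) gchoose m) * (- z) ^ m =
        ((- 1) ^ m * (- 1) ^ m) * pochhammer a m / fact m * z ^ m"
      by (simp add: gbinomial_pochhammer power_minus[of z])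
    moreover have "pochhammer b m \<noteq> 0"
      using assms(1) pochhammer_eq_0_imp_nonpos_Int by blast
    ultimately show ?thesis
      by (simp add: hyp2F1_term_def flip: power_add)
  qed
  ultimately show ?thesis
    by simp
qed

lemma pochhammer_plus_one_Suc: "pochhammer (a + 1) (Suc m) = (a + 1) * pochhammer (a + 2) m"
  by (simp only: pochhammer_rec add.assoc one_add_one)

lemma hyp2F1_term_contiguous:
  "hyp2F1_term a (b + 1) (a + 1) z (Suc m) =
     hyp2F1_term a b (a + 1) z (Suc m) +
     a * z / (a + 1) * hyp2F1_term (a + 1) (b + 1) (a + 2) z m"
proof -
  have "pochhammer (b + 1) (Suc m) =
      pochhammer b (Suc m) + of_nat (Suc m) * pochhammer (b + 1) m"
    unfolding pochhammer_rec[of b] pochhammer_rec'[of "b + 1"] by (simp add: algebra_simps)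
  then have "hyp2F1_term a (b + 1) (a + 1) z (Suc m) = hyp2F1_term a b (a + 1) z (Suc m) +
      pochhammer a (Suc m) * (of_nat (Suc m) * pochhammer (b + 1) m) /
        (fact (Suc m) * pochhammer (a + 1) (Suc m)) * z ^ Suc m"
    by (simp add: hyp2F1_term_def add_divide_distrib distrib_left distrib_right)
  also have "pochhammer a (Suc m) * (of_nat (Suc m) * pochhammer (b + 1) m) /
        (fact (Suc m) * pochhammer (a + 1) (Suc m)) * z ^ Suc m =
      a * z / (a + 1) * hyp2F1_term (a + 1) (b + 1) (a + 2) z m"
    unfolding hyp2F1_term_def pochhammer_rec[of a] pochhammer_plus_one_Suc fact_Suc
    by (simp add: divide_inverse mult_ac del: of_nat_Suc)
  finally show ?thesis .
qed

lemma hyp2F1_term_contiguous_sums: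
  assumes "hyp2F1_term a b (a + 1) z sums s"
    and "hyp2F1_term (a + 1) (b + 1) (a + 2) z sums t"
  shows "hyp2F1_term a (b + 1) (a + 1) z sums (s + a * z / (a + 1) * t)"
proof -
  have "(\<lambda>m. hyp2F1_term a b (a + 1) z (Suc m)) sums (s - 1)"
    using assms(1) by (subst sums_Suc_iff) simp
  then have "(\<lambda>m. hyp2F1_term a (b + 1) (a + 1) z (Suc m)) sums
      (s - 1 + a * z / (a + 1) * t)"
    unfolding hyp2F1_term_contiguous by (intro sums_add sums_mult assms(2))
  then show ?thesis
    by (subst (asm) sums_Suc_iff) simp
qed

lemma sum_choose_Suc:
  fixes f :: "nat \<Rightarrow> 'a :: comm_semiring_1"
  shows "(\<Sum>m\<le>Suc n. of_nat (Suc n choose m) * f m) =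
    (\<Sum>m\<le>n. of_nat (n choose m) * f m) + (\<Sum>m\<le>n. of_nat (n choose m) * f (Suc m))"
proof -
  have "(\<Sum>m\<le>n. of_nat (n choose m) * f m) = (\<Sum>m\<le>Suc n. of_nat (n choose m) * f m)"
    by (simp add: binomial_eq_0)
  also have "\<dots> = f 0 + (\<Sum>m\<le>n. of_nat (n choose Suc m) * f (Suc m))"
    by (subst sum.atMost_Suc_shift) simp
  finally have shift: "(\<Sum>m\<le>n. of_nat (n choose m) * f m) = \<dots>" .
  show ?thesis
    unfolding sum.atMost_Suc_shift[where n = n] binomial_Suc_Suc of_nat_add distrib_right
      sum.distrib shift
    by (simp add: algebra_simps)
qed

lemma hyp2F1_minus_of_nat_Suc:
  "hyp2F1 (- of_nat (Suc n)) a (a + 1) x =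
     hyp2F1 (- of_nat n) a (a + 1) x -
     a * x / (a + 1) * hyp2F1 (- of_nat n) (a + 1) (a + 2) x"
proof -
  define f where "f b m = pochhammer b m / pochhammer (b + 1) m * (- x) ^ m" for b m
  have hyp2F1_eq: "hyp2F1 (- of_nat j) b (b + 1) x = (\<Sum>m\<le>j. of_nat (j choose m) * f b m)"
    for j b
    unfolding hyp2F1_minus_of_nat f_def by (simp add: mult.assoc)
  have f_Suc: "f a (Suc m) = - (a * x / (a + 1)) * f (a + 1) m" for m
    unfolding f_def pochhammer_rec[of a] pochhammer_plus_one_Suc add.assoc one_add_one
    by (simp add: divide_inverse mult_ac)
  have "hyp2F1 (- of_nat (Suc n)) a (a + 1) x =
      hyp2F1 (- of_nat n) a (a + 1) x + (\<Sum>m\<le>n. of_nat (n choose m) * f a (Suc m))"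
    unfolding hyp2F1_eq sum_choose_Suc ..
  also have "(\<Sum>m\<le>n. of_nat (n choose m) * f a (Suc m)) =
      - (a * x / (a + 1)) * hyp2F1 (- of_nat n) (a + 1) (a + 1 + 1) x"
    unfolding f_Suc hyp2F1_eq sum_distrib_left by (simp add: mult_ac)
  finally show ?thesis
    by (simp add: add.assoc)
qed

lemma hyp2F1_term_sums_Pfaff:
  assumes "a + 1 \<notin> \<int>\<^sub>\<le>\<^sub>0" and "norm z < 1"
  shows "hyp2F1_term a (a + of_nat (Suc j)) (a + 1) z sums
           ((1 - z) powr (- a) * hyp2F1 (- of_nat j) a (a + 1) (z / (z - 1)))"
  using assms(1)
proof (induction j arbitrary: a)
  case 0
  have "hyp2F1 0 a (a + 1) (z / (z - 1)) = 1"
    using hyp2F1_minus_of_nat[of 0 a "a + 1"] by simp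
  with hyp2F1_term_sums_binomial[OF "0.prems" assms(2)] show ?case
    by simp
next
  case (Suc j)
  define x where "x = z / (z - 1)"
  define b where "b = a + of_nat (Suc j)"
  have "a + 2 \<notin> \<int>\<^sub>\<le>\<^sub>0"
    using Suc.prems plus_one_in_nonpos_Ints_imp[of "a + 1"] by (auto simp: add.assoc)
  then have "hyp2F1_term (a + 1) (b + 1) (a + 2) z sums
      ((1 - z) powr (- (a + 1)) * hyp2F1 (- of_nat j) (a + 1) (a + 2) x)"
    using Suc.IH[of "a + 1"] by (simp add: b_def x_def add_ac)
  from hyp2F1_term_contiguous_sums[OF Suc.IH[OF Suc.prems, folded b_def x_def] this]
  have "hyp2F1_term a (b + 1) (a + 1) z sums
      ((1 - z) powr (- a) * hyp2F1 (- of_nat j) a (a + 1) x +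
       a * z / (a + 1) * ((1 - z) powr (- (a + 1)) * hyp2F1 (- of_nat j) (a + 1) (a + 2) x))" .
  moreover have "(1 - z) powr (- a) * hyp2F1 (- of_nat j) a (a + 1) x +
       a * z / (a + 1) * ((1 - z) powr (- (a + 1)) * hyp2F1 (- of_nat j) (a + 1) (a + 2) x) =
      (1 - z) powr (- a) * hyp2F1 (- of_nat (Suc j)) a (a + 1) x"
  proof -
    have powr_eq: "(1 - z) powr (- (a + 1)) = (1 - z) powr (- a) / (1 - z)"
      unfolding minus_add_distrib powr_add powr_minus[of _ 1] powr_to_1
      by (simp add: divide_inverse)
    have "z / (z - 1) = - (z / (1 - z))"
      by (metis minus_diff_eq minus_divide_right)
    then show ?thesis
      unfolding powr_eq hyp2F1_minus_of_nat_Suc x_def by (simp add: divide_inverse algebra_simps)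
  qed
  ultimately show ?case
    by (simp add: b_def x_def add_ac)
qed

lemma hyp2F1_Pfaff:
  assumes "a + 1 \<notin> \<int>\<^sub>\<le>\<^sub>0" and "norm z < 1"
  shows "hyp2F1 a (a + of_nat (Suc j)) (a + 1) z =
           (1 - z) powr (- a) * hyp2F1 (- of_nat j) a (a + 1) (z / (z - 1))"
  using hyp2F1_term_sums_Pfaff[OF assms] by (simp add: hyp2F1_eq_suminf sums_iff)

lemma hyp2F1_minus_of_nat_minus_one:
  assumes "b + 1 \<notin> \<int>\<^sub>\<le>\<^sub>0"
  shows "hyp2F1 (- of_nat n) b (b + 1) (- 1) =
           2 ^ n - (\<Sum>m\<le>n. of_nat (n choose m) * of_nat m / (b + of_nat m))"
proof -
  have "hyp2F1 (- of_nat n) b (b + 1) (- 1) =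
      (\<Sum>m\<le>n. of_nat (n choose m) * (1 - of_nat m / (b + of_nat m)))"
    unfolding hyp2F1_minus_of_nat pochhammer_div_pochhammer_plus_one[OF assms] by simp
  also have "\<dots> = (\<Sum>m\<le>n. of_nat (n choose m)) -
      (\<Sum>m\<le>n. of_nat (n choose m) * of_nat m / (b + of_nat m))"
    by (simp add: right_diff_distrib sum_subtractf)
  also have "(\<Sum>m\<le>n. of_nat (n choose m)) = (2 :: complex) ^ n"
    by (metis choose_row_sum of_nat_numeral of_nat_power of_nat_sum)
  finally show ?thesis .
qed

lemma sum_choose_times_div_eq_hyp2F1:
  assumes "a + 1 \<notin> \<int>\<^sub>\<le>\<^sub>0"
  shows "(\<Sum>m\<le>j. of_nat (j choose m) * of_nat m / (a + of_nat m)) =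
           of_nat j / (a + 1) * hyp2F1 (1 - of_nat j) (a + 1) (a + 2) (- 1)"
proof (cases j)
  case 0
  \<comment> \<open>the series on the right does not terminate, but it is multiplied by 0\<close>
  then show ?thesis by simp
next
  case (Suc n)
  have "a + 2 \<notin> \<int>\<^sub>\<le>\<^sub>0"
    using assms plus_one_in_nonpos_Ints_imp[of "a + 1"] by (auto simp: add.assoc)
  have nonzero: "a + 1 + of_nat m \<noteq> 0" for m
    using assms plus_of_nat_eq_0_imp by blast
  have ratio: "pochhammer (a + 1) m / pochhammer (a + 2) m = (a + 1) / (a + 1 + of_nat m)" for m
    using pochhammer_div_pochhammer_plus_one[of "a + 1" m] \<open>a + 2 \<notin> \<int>\<^sub>\<le>\<^sub>0\<close>
      nonzero[of m]
    by (simp add: add.assoc field_simps)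
  have "(\<Sum>m\<le>Suc n. of_nat (Suc n choose m) * of_nat m / (a + of_nat m)) =
      (\<Sum>m\<le>n. of_nat (Suc n choose Suc m) * of_nat (Suc m) / (a + of_nat (Suc m)))"
    by (subst sum.atMost_Suc_shift) simp
  also have "\<dots> = (\<Sum>m\<le>n. of_nat (Suc n) / (a + 1) *
      (of_nat (n choose m) * (pochhammer (a + 1) m / pochhammer (a + 2) m)))"
  proof (rule sum.cong)
    fix m
    have "of_nat (Suc n choose Suc m) * of_nat (Suc m) =
        (of_nat (Suc n) * of_nat (n choose m) :: complex)"
      using Suc_times_binomial[of m n] by (metis mult.commute of_nat_mult)
    then have "of_nat (Suc n choose Suc m) * of_nat (Suc m) / (a + of_nat (Suc m)) =
        of_nat (Suc n) * of_nat (n choose m) / (a + 1 + of_nat m)"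
      by (simp add: add.assoc)
    also have "\<dots> = of_nat (Suc n) / (a + 1) *
        (of_nat (n choose m) * (pochhammer (a + 1) m / pochhammer (a + 2) m))"
      using nonzero[of 0] unfolding ratio by simp
    finally show "of_nat (Suc n choose Suc m) * of_nat (Suc m) / (a + of_nat (Suc m)) = \<dots>" .
  qed simp
  also have "\<dots> = of_nat (Suc n) / (a + 1) * hyp2F1 (- of_nat n) (a + 1) (a + 2) (- 1)"
    by (simp add: hyp2F1_minus_of_nat sum_distrib_left)
  finally show ?thesis
    by (simp add: Suc)
qed

lemma sum_choose_times_div_eq_sum_fact:
  fixes a :: "'a :: field_char_0"
  shows "(\<Sum>m\<le>j. of_nat (j choose m) * of_nat m / (a + of_nat m)) =
           (\<Sum>i=1..j. fact j / (fact (i - 1) * fact (j - i) * (a + of_nat i)))"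
proof -
  have "(\<Sum>m\<le>j. of_nat (j choose m) * of_nat m / (a + of_nat m)) =
      (\<Sum>i=1..j. of_nat (j choose i) * of_nat i / (a + of_nat i))"
    by (simp add: atMost_atLeast0 sum.atLeast_Suc_atMost)
  also have "\<dots> = (\<Sum>i=1..j. fact j / (fact (i - 1) * fact (j - i) * (a + of_nat i)))"
  proof (rule sum.cong)
    fix i assume "i \<in> {1..j}"
    then have "i \<le> j" "0 < i" by auto
    then show "of_nat (j choose i) * of_nat i / (a + of_nat i) =
        fact j / (fact (i - 1) * fact (j - i) * (a + of_nat i))"
      unfolding binomial_fact[OF \<open>i \<le> j\<close>] fact_reduce[OF \<open>0 < i\<close>]
      by (simp add: divide_inverse)
  qed simp
  finally show ?thesis .
qed

lemma half_powr_minus: "(1 / 2 :: complex) powr (- a) = 2 powr a"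
proof -
  have "Ln (1 / 2 :: complex) = - Ln 2"
    using Ln_of_real[of "1 / 2"] Ln_of_real[of 2] by (simp add: ln_div)
  then show ?thesis
    by (simp add: powr_def)
qed

theorem mainTheorem2:
  fixes k :: nat and a :: complex
  assumes "k \<ge> 1"
    and "\<And>n::nat. n \<ge> 1 \<Longrightarrow> a \<noteq> - of_nat n"
  shows "hyp2F1 a (a + of_nat k) (a + 1) (1/2) =
           2 powr a * (2 ^ (k - 1)
             - (of_nat k - 1) / (a + 1) * hyp2F1 (2 - of_nat k) (a + 1) (a + 2) (-1))
       \<and> hyp2F1 a (a + of_nat k) (a + 1) (1/2) =
           2 powr a * (2 ^ (k - 1)
             - (\<Sum>i=1..k-1. fact (k - 1) / (fact (i - 1) * fact (k - i - 1) * (a + of_nat i))))"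
proof -
  have a: "a + 1 \<notin> \<int>\<^sub>\<le>\<^sub>0"
  proof
    assume "a + 1 \<in> \<int>\<^sub>\<le>\<^sub>0"
    then obtain n where "a + 1 = - of_nat n"
      by (rule nonpos_Ints_cases')
    then have "a = - of_nat (Suc n)"
      by (metis add_diff_cancel_right' diff_minus_eq_add minus_add_distrib of_nat_Suc add.commute)
    with assms(2)[of "Suc n"] show False
      by simp
  qed
  obtain j where k: "k = Suc j"
    using assms(1) by (cases k) auto
  define D where "D = (\<Sum>m\<le>j. of_nat (j choose m) * of_nat m / (a + of_nat m))"
  have "hyp2F1 a (a + of_nat k) (a + 1) (1 / 2) = 2 powr a * (2 ^ j - D)"
    using hyp2F1_Pfaff[OF a, of "1 / 2" j]
    by (simp add: k D_def half_powr_minus hyp2F1_minus_of_nat_minus_one[OF a])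
  moreover have "D = of_nat j / (a + 1) * hyp2F1 (1 - of_nat j) (a + 1) (a + 2) (- 1)"
    unfolding D_def by (rule sum_choose_times_div_eq_hyp2F1[OF a])
  moreover have "D = (\<Sum>i=1..j. fact j / (fact (i - 1) * fact (j - i) * (a + of_nat i)))"
    unfolding D_def by (rule sum_choose_times_div_eq_sum_fact)
  ultimately show ?thesis
    by (simp add: k)
qed

end
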